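(* Let $(H,\prec,\cdot,\succ,\Delta)$ be a connected $q$-tridendriform bialgebra and let $e_{tri}:H\to H$ be defined by $e_{tri}(x)=\sum_{n\ge1}(-1)^{n+1}\succ^n\circ\bar\Delta^n(x)$. Then for every $x\in H$, $e_{tri}(x)=x-\sum x_{(1)}\succ e_{tri}(x_{(2)})$ where $\bar\Delta(x)=\sum x_{(1)}\otimes x_{(2)}$; moreover $e_{tri}(x)=x$ for every primitive $x$, and $e_{tri}(y\succ z)=0$ for all $y,z\in H$.
   Context: $q$-tridendriform algebra: vector space $H$ with bilinear $\prec,\cdot,\succ$ satisfying (1) $(a\prec b)\prec c=a\prec(b\prec c+b\succ c+q\,b\cdot c)$; (2) $(a\succ b)\prec c=a\succ(b\prec c)$; (3) $(a\prec b+a\succ b+q\,a\cdot b)\succ c=a\succ(b\succ c)$; (4) $(a\cdot b)\cdot c=a\cdot(b\cdot c)$; (5) $(a\succ b)\cdot c=a\succ(b\cdot c)$; (6) $(a\prec b)\cdot c=a\cdot(b\succ c)$; (7) $(a\cdot b)\prec c=a\cdot(b\prec c)$; $*:=\prec+q\,\cdot+\succ$. Unit conventions: $H_+=H\oplus\mathbb{K}1$, $\epsilon$ the projection to $\mathbb{K}$; $x\succ1=x\cdot1=1\cdot x=1\prec x=0$, $1\succ x=x=x\prec1$, $1*x=x*1=x$, and $(x*y)\otimes(1\circ1):=(x\circ y)\otimes1$ for $\circ\in\{\succ,\cdot,\prec\}$. A $q$-tridendriform bialgebra is such $H$ with linear $\Delta:H_+\to H_+\otimes H_+$, $\Delta(1)=1\otimes1$,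 $(\epsilon\otimes\mathrm{Id})\Delta(x)=1\otimes x$, $(\mathrm{Id}\otimes\epsilon)\Delta(x)=x\otimes1$, and $\Delta(x\circ y)=\sum(x_{(1)}*y_{(1)})\otimes(x_{(2)}\circ y_{(2)})$ for $\circ\in\{\succ,\cdot,\prec\}$, $x,y\in H$. Primitive: $\Delta(x)=x\otimes1+1\otimes x$. Reduced coproduct $\bar\Delta(x)=\Delta(x)-x\otimes1-1\otimes x\in H\otimes H$ for $x\in H$. Filtration: $F_1(H)=\mathrm{Prim}(H)$, $F_n(H)=\{x\in H:\bar\Delta(x)\in F_{n-1}(H)\otimes F_{n-1}(H)\}$; $H$ is connected if $H=\bigcup_{n\ge1}F_n(H)$. $\succ^1=\mathrm{Id}$, $\succ^n=\succ^{n-1}\circ(\mathrm{Id}^{\otimes n-2}\otimes\succ):H^{\otimes n}\to H$ (so $\succ^n(x_1\otimes\cdots\otimes x_n)=x_1\succ(x_2\succ(\cdots\succ x_n))$); $\bar\Delta^1=\mathrm{Id}$, $\bar\Delta^n=(\mathrm{Id}^{\otimes n-2}\otimes\bar\Delta)\circ\bar\Delta^{n-1}:H\to H^{\otimes n}$. By connectedness the sum defining $e_{tri}$ is finite for each $x$. *)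

theory Defs
  imports Main "HOL.Vector_Spaces" "HOL-Library.Product_Plus"
begin

(* K = field 'k, H = type 'h with scalar multiplication sc (a K-vector space).
   H_+ = H \<oplus> K1 is represented by pairs (h, c) :: 'h \<times> 'k meaning h + c*1.
   Tensors in V \<otimes> W are represented by finite lists of pairs (finite sums of
   simple tensors); equality of tensors is tested against all bilinear forms
   V \<times> W \<rightarrow> K (which characterises equality in V \<otimes> W over a field). *)

definition psc :: "('k::field \<Rightarrow> 'h::ab_group_add \<Rightarrow> 'h) \<Rightarrow> 'k \<Rightarrow> 'h \<times> 'k \<Rightarrow> 'h \<times> 'k" where
  "psc sc c u = (sc c (fst u), c * snd u)"

definition bilin :: "('k::field \<Rightarrow> 'a::ab_group_add \<Rightarrow> 'a) \<Rightarrow> ('k \<Rightarrow> 'b::ab_group_add \<Rightarrow> 'b)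
    \<Rightarrow> ('k \<Rightarrow> 'c::ab_group_add \<Rightarrow> 'c) \<Rightarrow> ('a \<Rightarrow> 'b \<Rightarrow> 'c) \<Rightarrow> bool" where
  "bilin sa sb sc f \<longleftrightarrow>
     (\<forall>x x' y. f (x + x') y = f x y + f x' y) \<and>
     (\<forall>x y y'. f x (y + y') = f x y + f x y') \<and>
     (\<forall>c x y. f (sa c x) y = sc c (f x y)) \<and>
     (\<forall>c x y. f x (sb c y) = sc c (f x y))"

definition teq :: "('k::field \<Rightarrow> 'a::ab_group_add \<Rightarrow> 'a) \<Rightarrow> ('k \<Rightarrow> 'b::ab_group_add \<Rightarrow> 'b)
    \<Rightarrow> ('a \<times> 'b) list \<Rightarrow> ('a \<times> 'b) list \<Rightarrow> bool" where
  "teq sa sb T S \<longleftrightarrow> (\<forall>\<beta> :: 'a \<Rightarrow> 'b \<Rightarrow> 'k. bilin sa sb (*) \<beta> \<longrightarrow>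
       (\<Sum>(a, b)\<leftarrow>T. \<beta> a b) = (\<Sum>(a, b)\<leftarrow>S. \<beta> a b))"

definition star :: "('k::field \<Rightarrow> 'h::ab_group_add \<Rightarrow> 'h) \<Rightarrow> 'k \<Rightarrow> ('h \<Rightarrow> 'h \<Rightarrow> 'h)
    \<Rightarrow> ('h \<Rightarrow> 'h \<Rightarrow> 'h) \<Rightarrow> ('h \<Rightarrow> 'h \<Rightarrow> 'h) \<Rightarrow> 'h \<Rightarrow> 'h \<Rightarrow> 'h" where
  "star sc q lt dt gt x y = lt x y + sc q (dt x y) + gt x y"

definition q_tridendriform :: "('k::field \<Rightarrow> 'h::ab_group_add \<Rightarrow> 'h) \<Rightarrow> 'k \<Rightarrow> ('h \<Rightarrow> 'h \<Rightarrow> 'h)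
    \<Rightarrow> ('h \<Rightarrow> 'h \<Rightarrow> 'h) \<Rightarrow> ('h \<Rightarrow> 'h \<Rightarrow> 'h) \<Rightarrow> bool" where
  "q_tridendriform sc q lt dt gt \<longleftrightarrow>
     vector_space sc \<and> bilin sc sc sc lt \<and> bilin sc sc sc dt \<and> bilin sc sc sc gt \<and>
     (\<forall>a b c.
        lt (lt a b) c = lt a (lt b c + gt b c + sc q (dt b c)) \<and>
        lt (gt a b) c = gt a (lt b c) \<and>
        gt (lt a b + gt a b + sc q (dt a b)) c = gt a (gt b c) \<and>
        dt (dt a b) c = dt a (dt b c) \<and>
        dt (gt a b) c = gt a (dt b c) \<and>
        dt (lt a b) c = dt a (gt b c) \<and>
        lt (dt a b) c = dt a (lt b c))"

definition pstar :: "('k::field \<Rightarrow> 'h::ab_group_add \<Rightarrow> 'h) \<Rightarrow> 'k \<Rightarrow> ('h \<Rightarrow> 'h \<Rightarrow> 'h)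
    \<Rightarrow> ('h \<Rightarrow> 'h \<Rightarrow> 'h) \<Rightarrow> ('h \<Rightarrow> 'h \<Rightarrow> 'h) \<Rightarrow> 'h \<times> 'k \<Rightarrow> 'h \<times> 'k \<Rightarrow> 'h \<times> 'k" where
  "pstar sc q lt dt gt u v =
     (star sc q lt dt gt (fst u) (fst v) + sc (snd v) (fst u) + sc (snd u) (fst v), snd u * snd v)"

text \<open>An operation op on H extended to H_+ with the unit conventions:
  ru: whether x op 1 = x (otherwise 0); lu: whether 1 op x = x (otherwise 0).
  The value of 1 op 1 never matters (it only meets the K\<otimes>K-component of
  Delta(x), x in H, which is 0 by the counit axioms); it is set to 0.\<close>
definition pop :: "('k::field \<Rightarrow> 'h::ab_group_add \<Rightarrow> 'h) \<Rightarrow> ('h \<Rightarrow> 'h \<Rightarrow> 'h) \<Rightarrow> bool \<Rightarrow> bool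
    \<Rightarrow> 'h \<times> 'k \<Rightarrow> 'h \<times> 'k \<Rightarrow> 'h" where
  "pop sc op ru lu u v = op (fst u) (fst v) + (if ru then sc (snd v) (fst u) else 0)
                         + (if lu then sc (snd u) (fst v) else 0)"

text \<open>The tensor (a*c) \<otimes> (b op d) in H_+ \<otimes> H_+, for a\<otimes>b a term of Delta(x) and
  c\<otimes>d a term of Delta(y), with the conventions x op 1, 1 op x as above and
  (x*y)\<otimes>(1 op 1) := (x op y)\<otimes>1.\<close>
definition compat_term :: "('k::field \<Rightarrow> 'h::ab_group_add \<Rightarrow> 'h) \<Rightarrow> 'k \<Rightarrow> ('h \<Rightarrow> 'h \<Rightarrow> 'h)
    \<Rightarrow> ('h \<Rightarrow> 'h \<Rightarrow> 'h) \<Rightarrow> ('h \<Rightarrow> 'h \<Rightarrow> 'h) \<Rightarrow> ('h \<Rightarrow> 'h \<Rightarrow> 'h) \<Rightarrow> bool \<Rightarrow> bool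
    \<Rightarrow> ('h \<times> 'k) \<times> ('h \<times> 'k) \<Rightarrow> ('h \<times> 'k) \<times> ('h \<times> 'k) \<Rightarrow> (('h \<times> 'k) \<times> ('h \<times> 'k)) list" where
  "compat_term sc q lt dt gt op ru lu ab cd =
     (let a = fst ab; b = snd ab; c = fst cd; d = snd cd;
          ac = pstar sc q lt dt gt a c in
      [ (ac, (op (fst b) (fst d), 0)),
        (psc sc (snd d) ac, (if ru then fst b else 0, 0)),
        (psc sc (snd b) ac, (if lu then fst d else 0, 0)),
        ((pop sc op ru lu a c, 0), (0, snd b * snd d)) ])"

definition compat :: "('k::field \<Rightarrow> 'h::ab_group_add \<Rightarrow> 'h) \<Rightarrow> 'k \<Rightarrow> ('h \<Rightarrow> 'h \<Rightarrow> 'h)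
    \<Rightarrow> ('h \<Rightarrow> 'h \<Rightarrow> 'h) \<Rightarrow> ('h \<Rightarrow> 'h \<Rightarrow> 'h) \<Rightarrow> ('h \<times> 'k \<Rightarrow> (('h \<times> 'k) \<times> ('h \<times> 'k)) list)
    \<Rightarrow> ('h \<Rightarrow> 'h \<Rightarrow> 'h) \<Rightarrow> bool \<Rightarrow> bool \<Rightarrow> bool" where
  "compat sc q lt dt gt Delta op ru lu \<longleftrightarrow>
     (\<forall>x y. teq (psc sc) (psc sc) (Delta (op x y, 0))
        (concat (map (\<lambda>ab. concat (map (\<lambda>cd. compat_term sc q lt dt gt op ru lu ab cd)
                                       (Delta (y, 0))))
                     (Delta (x, 0)))))"

definition q_tridendriform_bialgebra :: "('k::field \<Rightarrow> 'h::ab_group_add \<Rightarrow> 'h) \<Rightarrow> 'k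
    \<Rightarrow> ('h \<Rightarrow> 'h \<Rightarrow> 'h) \<Rightarrow> ('h \<Rightarrow> 'h \<Rightarrow> 'h) \<Rightarrow> ('h \<Rightarrow> 'h \<Rightarrow> 'h)
    \<Rightarrow> ('h \<times> 'k \<Rightarrow> (('h \<times> 'k) \<times> ('h \<times> 'k)) list) \<Rightarrow> bool" where
  "q_tridendriform_bialgebra sc q lt dt gt Delta \<longleftrightarrow>
     q_tridendriform sc q lt dt gt \<and>
     \<comment> \<open>Delta : H_+ \<rightarrow> H_+ \<otimes> H_+ is linear\<close>
     (\<forall>u v. teq (psc sc) (psc sc) (Delta (u + v)) (Delta u @ Delta v)) \<and>
     (\<forall>c u. teq (psc sc) (psc sc) (Delta (psc sc c u)) (map (\<lambda>(a, b). (psc sc c a, b)) (Delta u))) \<and>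
     \<comment> \<open>Delta(1) = 1 \<otimes> 1\<close>
     teq (psc sc) (psc sc) (Delta (0, 1)) [((0, 1), (0, 1))] \<and>
     \<comment> \<open>counit conditions for x in H\<close>
     (\<forall>x. (\<Sum>(a, b)\<leftarrow>Delta (x, 0). psc sc (snd a) b) = (x, 0)) \<and>
     (\<forall>x. (\<Sum>(a, b)\<leftarrow>Delta (x, 0). psc sc (snd b) a) = (x, 0)) \<and>
     \<comment> \<open>compatibilities for \<prec> (x\<prec>1 = x, 1\<prec>x = 0), \<cdot> (both 0), \<succ> (x\<succ>1 = 0, 1\<succ>x = x)\<close>
     compat sc q lt dt gt Delta lt True False \<and>
     compat sc q lt dt gt Delta dt False False \<and>
     compat sc q lt dt gt Delta gt False True"

definition primitive :: "('k::field \<Rightarrow> 'h::ab_group_add \<Rightarrow> 'h)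
    \<Rightarrow> ('h \<times> 'k \<Rightarrow> (('h \<times> 'k) \<times> ('h \<times> 'k)) list) \<Rightarrow> 'h \<Rightarrow> bool" where
  "primitive sc Delta x \<longleftrightarrow>
     teq (psc sc) (psc sc) (Delta (x, 0)) [((x, 0), (0, 1)), ((0, 1), (x, 0))]"

text \<open>Reduced coproduct of x in H: the H\<otimes>H-component of Delta(x), which equals
  Delta(x) - x\<otimes>1 - 1\<otimes>x by the counit conditions.\<close>
definition rDelta :: "('h::ab_group_add \<times> 'k::field \<Rightarrow> (('h \<times> 'k) \<times> ('h \<times> 'k)) list) \<Rightarrow> 'h \<Rightarrow> ('h \<times> 'h) list" where
  "rDelta Delta x = map (\<lambda>(a, b). (fst a, fst b)) (Delta (x, 0))"

text \<open>Filtration F_n (F_0 = {} unused, F_1 = Prim(H)).\<close>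
primrec filt :: "('k::field \<Rightarrow> 'h::ab_group_add \<Rightarrow> 'h)
    \<Rightarrow> ('h \<times> 'k \<Rightarrow> (('h \<times> 'k) \<times> ('h \<times> 'k)) list) \<Rightarrow> nat \<Rightarrow> 'h set" where
  "filt sc Delta 0 = {}"
| "filt sc Delta (Suc n) =
     (if n = 0 then {x. primitive sc Delta x}
      else {x. \<exists>T. teq sc sc (rDelta Delta x) T \<and> set T \<subseteq> filt sc Delta n \<times> filt sc Delta n})"

definition connected_bialg :: "('k::field \<Rightarrow> 'h::ab_group_add \<Rightarrow> 'h)
    \<Rightarrow> ('h \<times> 'k \<Rightarrow> (('h \<times> 'k) \<times> ('h \<times> 'k)) list) \<Rightarrow> bool" where
  "connected_bialg sc Delta \<longleftrightarrow> (\<forall>x. \<exists>n\<ge>1. x \<in> filt sc Delta n)"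

text \<open>Iterated reduced coproduct: rDelta^1 = Id, rDelta^n = (Id^(n-2) \<otimes> rDelta) o rDelta^(n-1);
  an element of H^{\<otimes> n} is a list of simple tensors x_1\<otimes>...\<otimes>x_n (lists of length n).\<close>
primrec iterD :: "('h::ab_group_add \<times> 'k::field \<Rightarrow> (('h \<times> 'k) \<times> ('h \<times> 'k)) list) \<Rightarrow> nat \<Rightarrow> 'h \<Rightarrow> 'h list list" where
  "iterD Delta 0 x = []"
| "iterD Delta (Suc n) x =
     (if n = 0 then [[x]]
      else concat (map (\<lambda>t. map (\<lambda>(a, b). butlast t @ [a, b]) (rDelta Delta (last t)))
                       (iterD Delta n x)))"

fun gtn :: "('h::ab_group_add \<Rightarrow> 'h \<Rightarrow> 'h) \<Rightarrow> 'h list \<Rightarrow> 'h" where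
  "gtn gt [] = 0"
| "gtn gt [x] = x"
| "gtn gt (x # y # zs) = gt x (gtn gt (y # zs))"

definition etri_term :: "('k::field \<Rightarrow> 'h::ab_group_add \<Rightarrow> 'h) \<Rightarrow> ('h \<Rightarrow> 'h \<Rightarrow> 'h)
    \<Rightarrow> ('h \<times> 'k \<Rightarrow> (('h \<times> 'k) \<times> ('h \<times> 'k)) list) \<Rightarrow> nat \<Rightarrow> 'h \<Rightarrow> 'h" where
  "etri_term sc gt Delta n x = sc ((-1) ^ (n + 1)) (\<Sum>t\<leftarrow>iterD Delta n x. gtn gt t)"

text \<open>e_tri(x) = sum over n \<ge> 1 of the terms; only finitely many are nonzero
  in a connected bialgebra, so we sum over the (finite) support.\<close>
definition e_tri :: "('k::field \<Rightarrow> 'h::ab_group_add \<Rightarrow> 'h) \<Rightarrow> ('h \<Rightarrow> 'h \<Rightarrow> 'h)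
    \<Rightarrow> ('h \<times> 'k \<Rightarrow> (('h \<times> 'k) \<times> ('h \<times> 'k)) list) \<Rightarrow> 'h \<Rightarrow> 'h" where
  "e_tri sc gt Delta x = (\<Sum>n | 1 \<le> n \<and> etri_term sc gt Delta n x \<noteq> 0. etri_term sc gt Delta n x)"

end

theory Submission
  imports Defs
begin

(* Write T n x = (-1)^(n+1) gt^n(rDelta^n x), so that e_tri x is the finite sum of the T n x.
   Unfolding the first tensor leg of rDelta^(n+1) gives the recursion
     T (n+1) x = - sum x' > T n x''     (rDelta x = sum x' (x) x''),
   and since T n vanishes on F_j for n > j, summing over n yields
     e_tri x = x - sum x' > e_tri x''.
   For primitive x the reduced coproduct is 0, so e_tri x = x.  For y > z, the compatibility of
   Delta with > and the counit conditions give an explicit formula for rDelta (y > z); feeding it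
   into the recursion, axiom (3) and an induction along the filtration show e_tri (y > z) = 0.

   Tensors are lists of simple tensors compared against all scalar bilinear forms (teq). *)

lemma additive_sum_list:
  fixes f :: "'a::ab_group_add \<Rightarrow> 'b::ab_group_add"
  assumes add: "\<And>x y. f (x + y) = f x + f y"
  shows "f (\<Sum>x\<leftarrow>xs. g x) = (\<Sum>x\<leftarrow>xs. f (g x))"
proof -
  have "f 0 = 0" using add[of 0 0] by simp
  then show ?thesis by (induct xs) (simp_all add: add)
qed

lemma sum_list_concat_map: "(\<Sum>x\<leftarrow>concat xss. f x) = (\<Sum>xs\<leftarrow>xss. \<Sum>x\<leftarrow>xs. f x)"
  by (induct xss) auto

text \<open>In a vector space, every nonzero vector is detected by some linear functional
  (the coordinate functional of a basis extending it).\<close>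
lemma linear_functional_separates:
  fixes sc :: "'k::field \<Rightarrow> 'h::ab_group_add \<Rightarrow> 'h"
  assumes vs: "vector_space sc" and w: "w \<noteq> 0"
  shows "\<exists>f::'h \<Rightarrow> 'k. (\<forall>x y. f (x + y) = f x + f y) \<and> (\<forall>c x. f (sc c x) = c * f x) \<and> f w \<noteq> 0"
proof -
  interpret vector_space sc by fact
  have ind: "independent {w}" using w by (simp add: independent_insert span_empty)
  define B where "B = extend_basis {w}"
  have iB: "independent B" unfolding B_def using independent_extend_basis[OF ind] .
  have sB: "span B = UNIV" unfolding B_def using span_extend_basis[OF ind] .
  have wB: "w \<in> B" unfolding B_def using extend_basis_superset[OF ind] by auto
  show ?thesis
    using representation_add[OF iB] representation_scale[OF iB] representation_basis[OF iB wB] sB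
    by (intro exI[of _ "\<lambda>v. representation B v w"]) auto
qed

lemma bilin_l: "bilin sa sb sc f \<Longrightarrow> f (x + x') y = f x y + f x' y"
  and bilin_r: "bilin sa sb sc f \<Longrightarrow> f x (y + y') = f x y + f x y'"
  and bilin_sl: "bilin sa sb sc f \<Longrightarrow> f (sa c x) y = sc c (f x y)"
  and bilin_sr: "bilin sa sb sc f \<Longrightarrow> f x (sb c y) = sc c (f x y)"
  unfolding bilin_def by auto

lemma bilin_zero_l: "bilin sa sb sc f \<Longrightarrow> f 0 y = 0"
  using bilin_l[of sa sb sc f 0 0 y] by simp

lemma bilin_zero_r: "bilin sa sb sc f \<Longrightarrow> f x 0 = 0"
  using bilin_r[of sa sb sc f x 0 0] by simp

lemma bilin_sum_l: "bilin sa sb sc f \<Longrightarrow> f (\<Sum>x\<leftarrow>xs. g x) y = (\<Sum>x\<leftarrow>xs. f (g x) y)"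
  using additive_sum_list[of "\<lambda>x. f x y"] bilin_l by metis

lemma bilin_sum_r: "bilin sa sb sc f \<Longrightarrow> f x (\<Sum>y\<leftarrow>ys. g y) = (\<Sum>y\<leftarrow>ys. f x (g y))"
  using additive_sum_list[of "\<lambda>y. f x y"] bilin_r by metis

lemma bilin_sum_forms:
  fixes F :: "'p \<Rightarrow> 'a::ab_group_add \<Rightarrow> 'b::ab_group_add \<Rightarrow> 'k::field"
  assumes "\<And>p. p \<in> set L \<Longrightarrow> bilin sa sb (*) (F p)"
  shows "bilin sa sb (*) (\<lambda>u v. \<Sum>p\<leftarrow>L. F p u v)"
  using assms by (induct L) (auto simp: bilin_def algebra_simps)

lemma teq_bilinear_sum:
  fixes sv :: "'k::field \<Rightarrow> 'c::ab_group_add \<Rightarrow> 'c"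
    and sa :: "'k \<Rightarrow> 'a::ab_group_add \<Rightarrow> 'a" and sb :: "'k \<Rightarrow> 'b::ab_group_add \<Rightarrow> 'b"
  assumes vs: "vector_space sv" and eq: "teq sa sb T S" and F: "bilin sa sb sv F"
  shows "(\<Sum>(a, b)\<leftarrow>T. F a b) = (\<Sum>(a, b)\<leftarrow>S. F a b)"
proof (rule ccontr)
  let ?w = "(\<Sum>(a, b)\<leftarrow>T. F a b) - (\<Sum>(a, b)\<leftarrow>S. F a b)"
  assume "(\<Sum>(a, b)\<leftarrow>T. F a b) \<noteq> (\<Sum>(a, b)\<leftarrow>S. F a b)"
  then obtain f :: "'c \<Rightarrow> 'k" where add: "\<And>x y. f (x + y) = f x + f y"
    and hom: "\<And>c x. f (sv c x) = c * f x" and fw: "f ?w \<noteq> 0"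
    using linear_functional_separates[OF vs, of ?w] by auto
  have "bilin sa sb (*) (\<lambda>a b. f (F a b))"
    using F unfolding bilin_def by (auto simp: add hom)
  then have "(\<Sum>(a, b)\<leftarrow>T. f (F a b)) = (\<Sum>(a, b)\<leftarrow>S. f (F a b))"
    using eq unfolding teq_def by blast
  moreover have "f (\<Sum>(a, b)\<leftarrow>L. F a b) = (\<Sum>(a, b)\<leftarrow>L. f (F a b))" for L
    using additive_sum_list[of f "case_prod F" L, OF add] by (simp add: split_def)
  moreover have "f (x - y) = f x - f y" for x y
    using add[of "x - y" y] by simp
  ultimately show False using fw by simp
qed

lemma teq_fst_fst:
  fixes sc :: "'k::field \<Rightarrow> 'h::ab_group_add \<Rightarrow> 'h"
  assumes "teq (psc sc) (psc sc) D D'"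
  shows "teq sc sc (map (\<lambda>(a, b). (fst a, fst b)) D) (map (\<lambda>(a, b). (fst a, fst b)) D')"
  unfolding teq_def
proof (intro allI impI)
  fix \<beta> :: "'h \<Rightarrow> 'h \<Rightarrow> 'k" assume "bilin sc sc (*) \<beta>"
  then have "bilin (psc sc) (psc sc) (*) (\<lambda>u v. \<beta> (fst u) (fst v))"
    unfolding bilin_def psc_def by auto
  then have "(\<Sum>(a, b)\<leftarrow>D. \<beta> (fst a) (fst b)) = (\<Sum>(a, b)\<leftarrow>D'. \<beta> (fst a) (fst b))"
    using assms unfolding teq_def by blast
  then show "(\<Sum>(a, b)\<leftarrow>map (\<lambda>(a, b). (fst a, fst b)) D. \<beta> a b)
           = (\<Sum>(a, b)\<leftarrow>map (\<lambda>(a, b). (fst a, fst b)) D'. \<beta> a b)"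
    by (simp add: o_def split_def)
qed

locale connected_tridendriform_bialgebra =
  fixes sc :: "'k::field \<Rightarrow> 'h::ab_group_add \<Rightarrow> 'h" and q :: 'k and lt dt gt :: "'h \<Rightarrow> 'h \<Rightarrow> 'h"
    and Delta :: "'h \<times> 'k \<Rightarrow> (('h \<times> 'k) \<times> ('h \<times> 'k)) list"
  assumes bialg: "q_tridendriform_bialgebra sc q lt dt gt Delta"
    and conn: "connected_bialg sc Delta"
begin

lemma tridendriform: "q_tridendriform sc q lt dt gt"
  using bialg unfolding q_tridendriform_bialgebra_def by auto

sublocale vector_space sc
  using tridendriform unfolding q_tridendriform_def by auto

lemma bil_lt: "bilin sc sc sc lt" and bil_dt: "bilin sc sc sc dt" and bil_gt: "bilin sc sc sc gt"
  using tridendriform unfolding q_tridendriform_def by auto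

lemmas gt_simps[simp] = bilin_l[OF bil_gt] bilin_r[OF bil_gt] bilin_sl[OF bil_gt] bilin_sr[OF bil_gt]
  bilin_zero_l[OF bil_gt] bilin_zero_r[OF bil_gt]
lemmas lt_simps[simp] = bilin_l[OF bil_lt] bilin_r[OF bil_lt] bilin_sl[OF bil_lt] bilin_sr[OF bil_lt]
  bilin_zero_l[OF bil_lt] bilin_zero_r[OF bil_lt]
lemmas dt_simps[simp] = bilin_l[OF bil_dt] bilin_r[OF bil_dt] bilin_sl[OF bil_dt] bilin_sr[OF bil_dt]
  bilin_zero_l[OF bil_dt] bilin_zero_r[OF bil_dt]

abbreviation "st \<equiv> star sc q lt dt gt"
abbreviation "rD \<equiv> rDelta Delta"
abbreviation "T \<equiv> etri_term sc gt Delta"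
abbreviation "E \<equiv> e_tri sc gt Delta"

lemma gt_star_assoc: "gt (st a b) c = gt a (gt b c)"
proof -
  have "gt (lt a b + gt a b + sc q (dt a b)) c = gt a (gt b c)"
    using tridendriform unfolding q_tridendriform_def by blast
  then show ?thesis unfolding star_def by (simp add: add_ac)
qed

lemma star_linear:
  "st (a + a') c = st a c + st a' c" "st (sc k a) c = sc k (st a c)"
  "st a (c + c') = st a c + st a c'" "st a (sc k c) = sc k (st a c)"
  by (simp_all add: star_def scale_right_distrib algebra_simps)

lemma gt_minus_r[simp]: "gt a (- v) = - gt a v"
proof -
  have "gt a v + gt a (- v) = 0" using gt_simps(2)[of a v "- v"] by simp
  then show ?thesis by (simp add: add_eq_0_iff)
qed

lemma gt_diff_r[simp]: "gt a (x - y) = gt a x - gt a y"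
  by (metis diff_conv_add_uminus gt_minus_r gt_simps(2))

lemma gt_sum_r: "gt a (\<Sum>x\<leftarrow>xs. g x) = (\<Sum>x\<leftarrow>xs. gt a (g x))"
  using bilin_sum_r[OF bil_gt] .

lemma scale_sum_list: "sc c (\<Sum>x\<leftarrow>xs. g x) = (\<Sum>x\<leftarrow>xs. sc c (g x))"
  using additive_sum_list[of "sc c"] by (simp add: scale_right_distrib)

lemma bilin_gt_linear:
  assumes "\<And>u v. f (u + v) = f u + f v" and "\<And>c u. f (sc c u) = sc c (f u)"
  shows "bilin sc sc sc (\<lambda>a b. gt a (f b))"
  using assms unfolding bilin_def by simp

lemma rD_sum_add:
  assumes F: "bilin sc sc sc F"
  shows "(\<Sum>(a, b)\<leftarrow>rD (u + v). F a b) = (\<Sum>(a, b)\<leftarrow>rD u. F a b) + (\<Sum>(a, b)\<leftarrow>rD v. F a b)"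
proof -
  have "teq (psc sc) (psc sc) (Delta ((u, 0) + (v, 0))) (Delta (u, 0) @ Delta (v, 0))"
    using bialg unfolding q_tridendriform_bialgebra_def by blast
  then have "teq sc sc (rD (u + v)) (rD u @ rD v)"
    using teq_fst_fst unfolding rDelta_def by fastforce
  then show ?thesis using teq_bilinear_sum[OF vector_space_axioms _ F] by simp
qed

lemma rD_sum_scale:
  assumes F: "bilin sc sc sc F"
  shows "(\<Sum>(a, b)\<leftarrow>rD (sc c u). F a b) = sc c (\<Sum>(a, b)\<leftarrow>rD u. F a b)"
proof -
  have "teq (psc sc) (psc sc) (Delta (psc sc c (u, 0))) (map (\<lambda>(a, b). (psc sc c a, b)) (Delta (u, 0)))"
    using bialg unfolding q_tridendriform_bialgebra_def by blast
  then have "teq sc sc (rD (sc c u)) (map (\<lambda>(a, b). (sc c a, b)) (rD u))"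
    using teq_fst_fst unfolding rDelta_def by (fastforce simp: psc_def o_def split_def)
  then have "(\<Sum>(a, b)\<leftarrow>rD (sc c u). F a b) = (\<Sum>(a, b)\<leftarrow>rD u. sc c (F a b))"
    using teq_bilinear_sum[OF vector_space_axioms _ F] by (simp add: o_def split_def bilin_sl[OF F])
  also have "\<dots> = sc c (\<Sum>(a, b)\<leftarrow>rD u. F a b)"
    by (simp add: scale_sum_list split_def)
  finally show ?thesis .
qed

lemma iterD_length: "t \<in> set (iterD Delta n x) \<Longrightarrow> length t = n"
  by (induct n arbitrary: t) (auto split: if_splits)

text \<open>rDelta^(n+1) = (Id \<otimes> rDelta^n) o rDelta: the recursion defining rDelta^n on the last leg
  can be unfolded on the first leg instead.\<close>
lemma iterD_Suc_first:
  assumes "n \<ge> 1"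
  shows "iterD Delta (Suc n) x = concat (map (\<lambda>(a, b). map ((#) a) (iterD Delta n b)) (rD x))"
  using assms
proof (induct n arbitrary: x rule: dec_induct)
  case base
  have "concat (map (\<lambda>(a, b). [[a, b]]) L) = map (\<lambda>(a, b). [a, b]) L" for L :: "('h \<times> 'h) list"
    by (induct L) auto
  then show ?case by (simp add: split_def)
next
  case (step n)
  let ?ext = "\<lambda>t. map (\<lambda>(a, b). butlast t @ [a, b]) (rD (last t))"
  have nonempty: "\<forall>s\<in>set (iterD Delta n b). s \<noteq> []" for b
    using step(1) by (auto dest!: iterD_length)
  have ext_cons: "concat (map ?ext (map ((#) c) L)) = map ((#) c) (concat (map ?ext L))"
    if "\<forall>s\<in>set L. s \<noteq> []" for c L
    using that by (induct L) (auto simp: split_def)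
  have "iterD Delta (Suc (Suc n)) x = concat (map ?ext (iterD Delta (Suc n) x))"
    using step(1) by simp
  also have "\<dots> = concat (map ?ext (concat (map (\<lambda>(a, b). map ((#) a) (iterD Delta n b)) (rD x))))"
    using step(3) by simp
  also have "\<dots> = concat (map (\<lambda>(a, b). map ((#) a) (iterD Delta (Suc n) b)) (rD x))"
  proof -
    have concat_bind: "concat (map f (concat (map G L))) = concat (map (\<lambda>p. concat (map f (G p))) L)"
      for f :: "'h list \<Rightarrow> 'h list list" and G and L :: "('h \<times> 'h) list"
      by (induct L) auto
    show ?thesis
      unfolding concat_bind using ext_cons[OF nonempty] step(1) by (simp add: split_def)
  qed
  finally show ?case .
qed

lemma etri_term_Suc:
  assumes n: "n \<ge> 1"
  shows "T (Suc n) x = - (\<Sum>(a, b)\<leftarrow>rD x. gt a (T n b))"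
proof -
  let ?S = "\<lambda>b. \<Sum>t\<leftarrow>iterD Delta n b. gtn gt t"
  have gtn_cons: "gtn gt (a # t) = gt a (gtn gt t)" if "t \<in> set (iterD Delta n b)" for a b t
    using iterD_length[OF that] n by (cases t) auto
  have "(\<Sum>t\<leftarrow>iterD Delta (Suc n) x. gtn gt t) = (\<Sum>(a, b)\<leftarrow>rD x. gt a (?S b))"
    unfolding iterD_Suc_first[OF n]
    by (simp add: sum_list_concat_map gt_sum_r o_def split_def gtn_cons cong: map_cong)
  then have "T (Suc n) x = sc ((-1) ^ (n + 2)) (\<Sum>(a, b)\<leftarrow>rD x. gt a (?S b))"
    by (simp add: etri_term_def)
  also have "\<dots> = (\<Sum>(a, b)\<leftarrow>rD x. - gt a (T n b))"
  proof -
    have "sc ((-1) ^ (n + 2)) (gt a (?S b)) = - gt a (T n b)" for a b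
      by (simp add: etri_term_def)
    then show ?thesis by (simp add: scale_sum_list split_def)
  qed
  also have "\<dots> = - (\<Sum>(a, b)\<leftarrow>rD x. gt a (T n b))"
    by (simp add: uminus_sum_list_map split_def o_def)
  finally show ?thesis .
qed

lemma etri_term_linear:
  assumes "n \<ge> 1"
  shows "T n (u + v) = T n u + T n v \<and> T n (sc c u) = sc c (T n u)"
  using assms
proof (induct n arbitrary: u v c rule: dec_induct)
  case base
  show ?case by (simp add: etri_term_def)
next
  case (step n)
  have F: "bilin sc sc sc (\<lambda>a b. gt a (T n b))"
    using step(3) by (intro bilin_gt_linear) blast+
  show ?case
    unfolding etri_term_Suc[OF step(1)] rD_sum_add[OF F] rD_sum_scale[OF F] by simp
qed

lemma bilin_gt_etri_term: "n \<ge> 1 \<Longrightarrow> bilin sc sc sc (\<lambda>a b. gt a (T n b))"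
  using etri_term_linear by (intro bilin_gt_linear) blast+

lemma rD_primitive: "primitive sc Delta x \<Longrightarrow> teq sc sc (rD x) []"
proof -
  assume "primitive sc Delta x"
  then have "teq sc sc (rD x) [(x, 0), (0, x)]"
    using teq_fst_fst unfolding primitive_def rDelta_def by fastforce
  then show ?thesis unfolding teq_def using bilin_zero_l bilin_zero_r by fastforce
qed

lemma filt_rD:
  assumes "x \<in> filt sc Delta j"
  obtains L where "teq sc sc (rD x) L" and "set L \<subseteq> filt sc Delta (j - 1) \<times> filt sc Delta (j - 1)"
proof (cases j)
  case 0 then show ?thesis using assms by simp
next
  case (Suc m)
  then show ?thesis
    using assms that rD_primitive by (cases "m = 0") (auto intro: that[of "[]"])
qed

lemma rD_sum_vanishes:
  assumes x: "x \<in> filt sc Delta j" and F: "bilin sc sc sc F"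
    and zero: "\<And>a b. a \<in> filt sc Delta (j - 1) \<Longrightarrow> b \<in> filt sc Delta (j - 1) \<Longrightarrow> F a b = 0"
  shows "(\<Sum>(a, b)\<leftarrow>rD x. F a b) = 0"
proof -
  obtain L where L: "teq sc sc (rD x) L" "set L \<subseteq> filt sc Delta (j - 1) \<times> filt sc Delta (j - 1)"
    using filt_rD[OF x] by blast
  have "(\<Sum>(a, b)\<leftarrow>rD x. F a b) = (\<Sum>(a, b)\<leftarrow>L. F a b)"
    using teq_bilinear_sum[OF vector_space_axioms L(1) F] .
  also have "\<dots> = 0"
    using L(2) zero by (induct L) auto
  finally show ?thesis .
qed

lemma filt_pos: "x \<in> filt sc Delta j \<Longrightarrow> j \<ge> 1"
  by (cases j) auto

lemma etri_term_vanishes: "x \<in> filt sc Delta j \<Longrightarrow> j < n \<Longrightarrow> T n x = 0"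
proof (induct j arbitrary: x n)
  case 0 then show ?case by simp
next
  case (Suc j)
  obtain m where n: "n = Suc m" and m: "m \<ge> 1" using Suc(3) by (cases n) auto
  have "(\<Sum>(a, b)\<leftarrow>rD x. gt a (T m b)) = 0"
    by (rule rD_sum_vanishes[OF Suc(2) bilin_gt_etri_term[OF m]]) (use Suc n in simp)
  then show ?case using etri_term_Suc[OF m] n by simp
qed

lemma e_tri_partial_sums: "\<forall>\<^sub>F N in sequentially. E x = (\<Sum>n<N. T (Suc n) x)"
proof -
  obtain j where j: "x \<in> filt sc Delta j" using conn unfolding connected_bialg_def by blast
  have "E x = (\<Sum>n<N. T (Suc n) x)" if N: "N \<ge> j" for N
  proof -
    have zero: "T n x = 0" if "n > N" for n using etri_term_vanishes[OF j] N that by simp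
    have "E x = (\<Sum>n\<in>{Suc 0..N}. T n x)"
      unfolding e_tri_def
      by (rule sum.mono_neutral_left) (auto simp: zero intro: ccontr dest: zero)
    also have "\<dots> = (\<Sum>n<N. T (Suc n) x)" by (rule sum.atLeast1_atMost_eq)
    finally show ?thesis .
  qed
  then show ?thesis unfolding eventually_sequentially by blast
qed

lemma e_tri_add: "E (u + v) = E u + E v"
proof -
  have "\<forall>\<^sub>F N in sequentially. E (u + v) = (\<Sum>n<N. T (Suc n) (u + v))
      \<and> E u = (\<Sum>n<N. T (Suc n) u) \<and> E v = (\<Sum>n<N. T (Suc n) v)"
    by (intro eventually_conj e_tri_partial_sums)
  then obtain N where "E (u + v) = (\<Sum>n<N. T (Suc n) (u + v))"
      "E u = (\<Sum>n<N. T (Suc n) u)" "E v = (\<Sum>n<N. T (Suc n) v)"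
    unfolding eventually_sequentially by blast
  then show ?thesis using etri_term_linear by (simp add: sum.distrib)
qed

lemma e_tri_scale: "E (sc c u) = sc c (E u)"
proof -
  have "\<forall>\<^sub>F N in sequentially. E (sc c u) = (\<Sum>n<N. T (Suc n) (sc c u)) \<and> E u = (\<Sum>n<N. T (Suc n) u)"
    by (intro eventually_conj e_tri_partial_sums)
  then obtain N where "E (sc c u) = (\<Sum>n<N. T (Suc n) (sc c u))" "E u = (\<Sum>n<N. T (Suc n) u)"
    unfolding eventually_sequentially by blast
  then show ?thesis using etri_term_linear by (simp add: scale_sum_right)
qed

lemma bilin_gt_e_tri: "bilin sc sc sc (\<lambda>a b. gt a (E b))"
  by (intro bilin_gt_linear e_tri_add e_tri_scale)

theorem e_tri_recursion: "E x = x - (\<Sum>(a, b)\<leftarrow>rD x. gt a (E b))"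
proof -
  have "\<forall>\<^sub>F N in sequentially. E x = (\<Sum>n<Suc N. T (Suc n) x)
      \<and> (\<forall>p\<in>set (rD x). E (snd p) = (\<Sum>n<N. T (Suc n) (snd p)))"
  proof (intro eventually_conj eventually_ball_finite ballI)
    show "\<forall>\<^sub>F N in sequentially. E x = (\<Sum>n<Suc N. T (Suc n) x)"
      using eventually_sequentially_Suc[where P="\<lambda>N. E x = (\<Sum>n<N. T (Suc n) x)"]
        e_tri_partial_sums[of x] by blast
  qed (use e_tri_partial_sums in auto)
  then obtain N where N: "E x = (\<Sum>n<Suc N. T (Suc n) x)"
      and legs: "\<And>a b. (a, b) \<in> set (rD x) \<Longrightarrow> E b = (\<Sum>n<N. T (Suc n) b)"
    unfolding eventually_sequentially by fastforce
  have "E x = x + (\<Sum>n<N. T (Suc (Suc n)) x)"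
    unfolding N sum.lessThan_Suc_shift by (simp add: etri_term_def)
  also have "\<dots> = x - (\<Sum>n<N. \<Sum>(a, b)\<leftarrow>rD x. gt a (T (Suc n) b))"
    by (simp add: etri_term_Suc sum_negf)
  also have "(\<Sum>n<N. \<Sum>(a, b)\<leftarrow>rD x. gt a (T (Suc n) b)) = (\<Sum>(a, b)\<leftarrow>rD x. gt a (E b))"
  proof -
    have swap: "(\<Sum>n<N. \<Sum>(a, b)\<leftarrow>L. f a b n) = (\<Sum>(a, b)\<leftarrow>L. \<Sum>n<N. f a b n)"
      for L :: "('h \<times> 'h) list" and f :: "'h \<Rightarrow> 'h \<Rightarrow> nat \<Rightarrow> 'h"
      by (induct L) (auto simp: sum.distrib)
    have gt_sum: "gt a (\<Sum>n<N. g n) = (\<Sum>n<N. gt a (g n))" for a g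
      by (induct N) auto
    show ?thesis
      unfolding swap using legs by (auto simp: gt_sum split_def intro!: arg_cong[where f=sum_list] map_cong)
  qed
  finally show ?thesis .
qed

theorem e_tri_primitive: "primitive sc Delta x \<Longrightarrow> E x = x"
  using e_tri_recursion[of x] teq_bilinear_sum[OF vector_space_axioms rD_primitive bilin_gt_e_tri] by simp

text \<open>By the counit conditions, Delta y = y \<otimes> 1 + 1 \<otimes> y + rDelta y in H_+ \<otimes> H_+.\<close>
definition Delta_split :: "'h \<Rightarrow> (('h \<times> 'k) \<times> ('h \<times> 'k)) list" where
  "Delta_split y = ((y, 0), (0, 1)) # ((0, 1), (y, 0)) # map (\<lambda>(a, b). ((a, 0), (b, 0))) (rD y)"

lemma Delta_eq_split: "teq (psc sc) (psc sc) (Delta (y, 0)) (Delta_split y)"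
  unfolding teq_def
proof (intro allI impI)
  fix \<beta> :: "'h \<times> 'k \<Rightarrow> 'h \<times> 'k \<Rightarrow> 'k" assume b: "bilin (psc sc) (psc sc) (*) \<beta>"
  let ?D = "Delta (y, 0)"
  have counit_l: "(\<Sum>(a, c)\<leftarrow>?D. psc sc (snd a) c) = (y, 0)"
    and counit_r: "(\<Sum>(a, c)\<leftarrow>?D. psc sc (snd c) a) = (y, 0)"
    using bialg unfolding q_tridendriform_bialgebra_def by blast+
  text \<open>Split each leg u = (fst u, 0) + snd u \<cdot> 1 and expand \<beta> bilinearly.\<close>
  have split: "\<beta> a c = \<beta> (fst a, 0) (fst c, 0) + \<beta> (0, 1) (sc (snd a) (fst c), 0)
      + \<beta> (psc sc (snd c) a) (0, 1)" for a c
  proof -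
    have leg: "u = (fst u, 0) + psc sc (snd u) (0, 1)" for u :: "'h \<times> 'k" by (simp add: psc_def)
    have "\<beta> a c = \<beta> a (fst c, 0) + snd c * \<beta> a (0, 1)"
      by (subst leg[of c]) (simp add: bilin_r[OF b] bilin_sr[OF b])
    also have "\<beta> a (fst c, 0) = \<beta> (fst a, 0) (fst c, 0) + snd a * \<beta> (0, 1) (fst c, 0)"
      by (subst leg[of a]) (simp add: bilin_l[OF b] bilin_sl[OF b])
    also have "snd a * \<beta> (0, 1) (fst c, 0) = \<beta> (0, 1) (sc (snd a) (fst c), 0)"
      using bilin_sr[OF b, of "(0, 1)" "snd a" "(fst c, 0)"] by (simp add: psc_def)
    also have "snd c * \<beta> a (0, 1) = \<beta> (psc sc (snd c) a) (0, 1)"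
      using bilin_sl[OF b] by simp
    finally show ?thesis by (simp add: add.assoc)
  qed
  have "(\<Sum>(a, c)\<leftarrow>?D. \<beta> a c) = (\<Sum>(a, c)\<leftarrow>?D. \<beta> (fst a, 0) (fst c, 0))
      + \<beta> (0, 1) (\<Sum>(a, c)\<leftarrow>?D. (sc (snd a) (fst c), 0)) + \<beta> (\<Sum>(a, c)\<leftarrow>?D. psc sc (snd c) a) (0, 1)"
  proof -
    have "(\<Sum>(a, c)\<leftarrow>?D. \<beta> a c) = (\<Sum>p\<leftarrow>?D. \<beta> (fst (fst p), 0) (fst (snd p), 0)
        + \<beta> (0, 1) (sc (snd (fst p)) (fst (snd p)), 0) + \<beta> (psc sc (snd (snd p)) (fst p)) (0, 1))"
      unfolding split_def by (rule arg_cong[where f=sum_list], rule map_cong[OF refl], rule split)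
    then show ?thesis
      by (simp add: sum_list_addf bilin_sum_l[OF b] bilin_sum_r[OF b] split_def)
  qed
  also have "(\<Sum>(a, c)\<leftarrow>?D. (sc (snd a) (fst c), 0 :: 'k)) = (y, 0)"
  proof -
    have pair_sum: "(\<Sum>x\<leftarrow>xs. (f x, 0::'k)) = (\<Sum>x\<leftarrow>xs. f x, 0)" for f :: "_ \<Rightarrow> 'h" and xs
      by (induct xs) (auto simp: zero_prod_def)
    have fst_sum: "fst (\<Sum>x\<leftarrow>xs. g x) = (\<Sum>x\<leftarrow>xs. fst (g x))" for g :: "_ \<Rightarrow> 'h \<times> 'k" and xs
      by (induct xs) auto
    show ?thesis
      using arg_cong[OF counit_l, of fst] by (simp add: pair_sum fst_sum split_def psc_def)
  qed
  finally show "(\<Sum>(a, c)\<leftarrow>?D. \<beta> a c) = (\<Sum>(a, c)\<leftarrow>Delta_split y. \<beta> a c)"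
    unfolding counit_r Delta_split_def rDelta_def by (simp add: split_def o_def algebra_simps)
qed

definition gt_compat_form :: "('h \<Rightarrow> 'h \<Rightarrow> 'k) \<Rightarrow> 'h \<times> 'k \<Rightarrow> 'h \<times> 'k \<Rightarrow> 'h \<times> 'k \<Rightarrow> 'h \<times> 'k \<Rightarrow> 'k" where
  "gt_compat_form \<beta> a b c d = \<beta> (fst (pstar sc q lt dt gt a c)) (gt (fst b) (fst d))
      + snd b * \<beta> (fst (pstar sc q lt dt gt a c)) (fst d)"

lemma rD_gt_compat:
  assumes b: "bilin sc sc (*) \<beta>"
  shows "(\<Sum>(a, c)\<leftarrow>rD (gt y z). \<beta> a c)
       = (\<Sum>(a, b)\<leftarrow>Delta (y, 0). \<Sum>(c, d)\<leftarrow>Delta (z, 0). gt_compat_form \<beta> a b c d)"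
proof -
  let ?C = "concat (map (\<lambda>ab. concat (map (\<lambda>cd. compat_term sc q lt dt gt gt False True ab cd)
                                       (Delta (z, 0)))) (Delta (y, 0)))"
  have "compat sc q lt dt gt Delta gt False True"
    using bialg unfolding q_tridendriform_bialgebra_def by blast
  then have "teq sc sc (rD (gt y z)) (map (\<lambda>(a, b). (fst a, fst b)) ?C)"
    using teq_fst_fst unfolding compat_def rDelta_def by blast
  then have "(\<Sum>(a, c)\<leftarrow>rD (gt y z). \<beta> a c) = (\<Sum>p\<leftarrow>?C. \<beta> (fst (fst p)) (fst (snd p)))"
    using b unfolding teq_def by (simp add: o_def split_def)
  also have "\<dots> = (\<Sum>(a, b)\<leftarrow>Delta (y, 0). \<Sum>(c, d)\<leftarrow>Delta (z, 0). gt_compat_form \<beta> a b c d)"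
    unfolding sum_list_concat_map map_map o_def
    by (simp add: split_def compat_term_def Let_def gt_compat_form_def bilin_zero_r[OF b]
        bilin_sl[OF b] psc_def add.assoc)
  finally show ?thesis .
qed

lemma bilin_gt_compat_form_left:
  assumes b: "bilin sc sc (*) \<beta>"
  shows "bilin (psc sc) (psc sc) (*) (\<lambda>a b. gt_compat_form \<beta> a b c d)"
  unfolding bilin_def gt_compat_form_def pstar_def star_def psc_def
  by (simp add: bilin_l[OF b] bilin_r[OF b] bilin_sl[OF b] bilin_sr[OF b]
      scale_right_distrib scale_left_distrib algebra_simps)

lemma bilin_gt_compat_form_right:
  assumes b: "bilin sc sc (*) \<beta>"
  shows "bilin (psc sc) (psc sc) (*) (\<lambda>c d. gt_compat_form \<beta> a b c d)"
  unfolding bilin_def gt_compat_form_def pstar_def star_def psc_def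
  by (simp add: bilin_l[OF b] bilin_r[OF b] bilin_sl[OF b] bilin_sr[OF b]
      scale_right_distrib scale_left_distrib algebra_simps)

text \<open>The reduced coproduct of y > z, from the compatibility of Delta with >:
  rDelta (y > z) = y \<otimes> z + (y * z') \<otimes> z'' + z' \<otimes> (y > z'') + y' \<otimes> (y'' > z)
                 + (y' * z') \<otimes> (y'' > z'').\<close>
definition rDelta_gt :: "'h \<Rightarrow> 'h \<Rightarrow> ('h \<times> 'h) list" where
  "rDelta_gt y z = (y, z) # map (\<lambda>(c, d). (st y c, d)) (rD z) @ map (\<lambda>(c, d). (c, gt y d)) (rD z)
     @ concat (map (\<lambda>(a, b). (a, gt b z) # map (\<lambda>(c, d). (st a c, gt b d)) (rD z)) (rD y))"

lemma teq_rDelta_gt: "teq sc sc (rD (gt y z)) (rDelta_gt y z)"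
  unfolding teq_def
proof (intro allI impI)
  fix \<beta> :: "'h \<Rightarrow> 'h \<Rightarrow> 'k" assume b: "bilin sc sc (*) \<beta>"
  let ?G = "gt_compat_form \<beta>"
  have inner: "(\<Sum>(c, d)\<leftarrow>Delta (z, 0). ?G a b c d) = (\<Sum>(c, d)\<leftarrow>Delta_split z. ?G a b c d)" for a b
    using Delta_eq_split[of z] bilin_gt_compat_form_right[OF b] unfolding teq_def by blast
  have "bilin (psc sc) (psc sc) (*) (\<lambda>a b. \<Sum>p\<leftarrow>Delta_split z. ?G a b (fst p) (snd p))"
    using bilin_gt_compat_form_left[OF b] by (intro bilin_sum_forms)
  then have outer: "(\<Sum>(a, b)\<leftarrow>Delta (y, 0). \<Sum>(c, d)\<leftarrow>Delta_split z. ?G a b c d)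
      = (\<Sum>(a, b)\<leftarrow>Delta_split y. \<Sum>(c, d)\<leftarrow>Delta_split z. ?G a b c d)"
    using Delta_eq_split[of y] unfolding teq_def split_def by blast
  have "(\<Sum>(a, c)\<leftarrow>rD (gt y z). \<beta> a c) = (\<Sum>(a, b)\<leftarrow>Delta_split y. \<Sum>(c, d)\<leftarrow>Delta_split z. ?G a b c d)"
    unfolding rD_gt_compat[OF b] inner outer ..
  also have "\<dots> = (\<Sum>(a, c)\<leftarrow>rDelta_gt y z. \<beta> a c)"
    by (simp add: Delta_split_def rDelta_gt_def gt_compat_form_def pstar_def star_def split_def o_def
        sum_list_concat_map bilin_zero_l[OF b] bilin_zero_r[OF b] add.assoc)
  finally show "(\<Sum>(a, c)\<leftarrow>rD (gt y z). \<beta> a c) = (\<Sum>(a, c)\<leftarrow>rDelta_gt y z. \<beta> a c)" .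
qed

text \<open>Induction on the filtration degrees of y and z: the recursion turns e_tri (y > z) into the
  sum over rDelta (y > z); the terms involving e_tri (y'' > _) or e_tri (_ > z'') vanish by
  induction, and the remaining ones cancel by axiom (3).\<close>
lemma e_tri_gt_filt: "y \<in> filt sc Delta i \<Longrightarrow> z \<in> filt sc Delta j \<Longrightarrow> E (gt y z) = 0"
proof (induct "i + j" arbitrary: i j y z rule: less_induct)
  case less
  note y = less(2) and z = less(3)
  have i: "i \<ge> 1" and j: "j \<ge> 1" using filt_pos y z by auto
  have IH: "E (gt y' z') = 0"
    if "y' \<in> filt sc Delta i'" "z' \<in> filt sc Delta j'" "i' + j' < i + j" for y' z' i' j'
    using less(1) that by blast
  have right_legs: "(\<Sum>(c, d)\<leftarrow>rD z. gt c (E (gt y d))) = 0"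
  proof (rule rD_sum_vanishes[OF z])
    show "bilin sc sc sc (\<lambda>c d. gt c (E (gt y d)))" by (simp add: bilin_def e_tri_add e_tri_scale)
    show "gt c (E (gt y d)) = 0" if "d \<in> filt sc Delta (j - 1)" for c d
      using IH[OF y that] j by simp
  qed
  have mixed_legs: "(\<Sum>(c, d)\<leftarrow>rD z. gt (st a c) (E (gt b d))) = 0"
    if "b \<in> filt sc Delta (i - 1)" for a b
  proof (rule rD_sum_vanishes[OF z])
    show "bilin sc sc sc (\<lambda>c d. gt (st a c) (E (gt b d)))"
      by (simp add: bilin_def e_tri_add e_tri_scale star_linear)
    show "gt (st a c) (E (gt b d)) = 0" if "d \<in> filt sc Delta (j - 1)" for c d
      using IH[OF \<open>b \<in> filt sc Delta (i - 1)\<close> that] i j by simp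
  qed
  have left_legs: "(\<Sum>(a, b)\<leftarrow>rD y. gt a (E (gt b z)) + (\<Sum>(c, d)\<leftarrow>rD z. gt (st a c) (E (gt b d)))) = 0"
  proof (rule rD_sum_vanishes[OF y])
    show "bilin sc sc sc (\<lambda>a b. gt a (E (gt b z)) + (\<Sum>(c, d)\<leftarrow>rD z. gt (st a c) (E (gt b d))))"
      by (simp add: bilin_def e_tri_add e_tri_scale star_linear split_def sum_list_addf
          scale_sum_list scale_right_distrib add_ac)
    show "gt a (E (gt b z)) + (\<Sum>(c, d)\<leftarrow>rD z. gt (st a c) (E (gt b d))) = 0"
      if "b \<in> filt sc Delta (i - 1)" for a b
      using that i z mixed_legs[OF that] IH[of b "i - 1" z j] by simp
  qed
  have first_term: "gt y (E z) = gt y z - (\<Sum>(c, d)\<leftarrow>rD z. gt (st y c) (E d))"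
    by (subst e_tri_recursion) (simp add: gt_sum_r split_def gt_star_assoc)
  have "(\<Sum>(a, b)\<leftarrow>rD (gt y z). gt a (E b)) = (\<Sum>(a, b)\<leftarrow>rDelta_gt y z. gt a (E b))"
    by (rule teq_bilinear_sum[OF vector_space_axioms teq_rDelta_gt bilin_gt_e_tri])
  also have "\<dots> = gt y z"
    using first_term right_legs left_legs
    by (simp add: rDelta_gt_def split_def o_def sum_list_concat_map)
  finally show ?case using e_tri_recursion[of "gt y z"] by simp
qed

theorem e_tri_gt: "E (gt y z) = 0"
proof -
  obtain i j where "y \<in> filt sc Delta i" and "z \<in> filt sc Delta j"
    using conn unfolding connected_bialg_def by blast
  then show ?thesis by (rule e_tri_gt_filt)
qed

end

theorem mainTheorem3:
  fixes sc :: "'k::field \<Rightarrow> 'h::ab_group_add \<Rightarrow> 'h"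
    and q :: 'k
    and lt dt gt :: "'h \<Rightarrow> 'h \<Rightarrow> 'h"
    and Delta :: "'h \<times> 'k \<Rightarrow> (('h \<times> 'k) \<times> ('h \<times> 'k)) list"
  assumes "q_tridendriform_bialgebra sc q lt dt gt Delta"
    and "connected_bialg sc Delta"
  shows "(\<forall>x. e_tri sc gt Delta x = x - (\<Sum>(a, b)\<leftarrow>rDelta Delta x. gt a (e_tri sc gt Delta b)))
       \<and> (\<forall>x. primitive sc Delta x \<longrightarrow> e_tri sc gt Delta x = x)
       \<and> (\<forall>y z. e_tri sc gt Delta (gt y z) = 0)"
proof -
  interpret connected_tridendriform_bialgebra sc q lt dt gt Delta
    using assms by unfold_locales
  show ?thesis using e_tri_recursion e_tri_primitive e_tri_gt by blast
qed

end
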